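(* For every $\theta,\bar\theta\in\mathbb R^m$ there exists a stochastic policy $\mu_{\theta,\bar\theta}$ such that \[ T_{\alpha,\eta}(\theta)-T_{\alpha,\eta}(\bar\theta)=A^\eta_{\mu_{\theta,\bar\theta}}(\theta-\bar\theta). \] In particular, suppose $\theta^\star_\eta$ satisfies $\Phi^\top D(R+\gamma PV_{\theta^\star_\eta}-\Phi\theta^\star_\eta)-\eta\theta^\star_\eta=0$, $\theta_{k+1}=T_{\alpha,\eta}(\theta_k)$, and $x_k:=\theta_k-\theta^\star_\eta$. Then $x_{k+1}=A^\eta_{\mu_k}x_k$ for all $k\ge0$, where each $\mu_k$ is a stochastic policy depending measurably on $(\theta_k,\theta^\star_\eta)$.
   Context: Consider a finite discounted MDP with state space $\mathcal S=\{1,\dots,|\mathcal S|\}$, action space $\mathcal A=\{1,\dots,|\mathcal A|\}$, transition probabilities $P(s'\mid s,a)$, expected reward $R(s,a)$, and discount factor $\gamma\in(0,1)$. State-action vectors are ordered as $(1,1),(2,1),\dots,(|\mathcal S|,1),(1,2),\dots$. The matrix $P$ has rows $P(\cdot\mid s,a)$, and $R$ has entries $R(s,a)$. A stochastic policy is a map $\mu:\mathcal S\to\Delta_{|\mathcal A|}$. The matrix $\Pi^\mu\in\mathbb R^{|\mathcal S|\times|\mathcal S||\mathcal A|}$ has entry $\mu(a\mid s)$ at row $s$, column $(s,a)$, and zeros elsewhere. The feature matrix $\Phi\in\mathbb R^{|\mathcal S||\mathcal A|\times m}$ has full column rank and rows $\phi(s,a)^\top$. Define $V_\theta(s)=\max_a\phi(s,a)^\top\theta$.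 The distribution $d>0$ on $\mathcal S\times\mathcal A$ gives $D=\mathrm{diag}(d)$. The step size is $\alpha\in(0,1)$ and the regularization weight is $\eta\ge0$. Define $T_{\alpha,\eta}(\theta):=\theta+\alpha[\Phi^\top D(R+\gamma PV_\theta-\Phi\theta)-\eta\theta]$ and \[ A^\eta_\mu:=I-\alpha(\Phi^\top D\Phi+\eta I)+\alpha\gamma\Phi^\top DP\Pi^\mu\Phi. \] *)

theory Defs
  imports "HOL-Analysis.Analysis"
begin

text \<open>States 's, actions 'a, features 'm are finite index types.
  State-action vectors are indexed by the product type 's \<times> 'a.\<close>

definition diag_mat :: "real ^ 'n \<Rightarrow> real ^ 'n ^ 'n" where
  "diag_mat d = (\<chi> i j. if i = j then d $ i else 0)"

definition is_stoch_policy :: "('s::finite \<Rightarrow> 'a::finite \<Rightarrow> real) \<Rightarrow> bool" where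
  "is_stoch_policy \<mu> \<longleftrightarrow> (\<forall>s a. 0 \<le> \<mu> s a) \<and> (\<forall>s. (\<Sum>a\<in>UNIV. \<mu> s a) = 1)"

definition Pi_mat :: "('s::finite \<Rightarrow> 'a::finite \<Rightarrow> real) \<Rightarrow> real ^ ('s \<times> 'a) ^ 's" where
  "Pi_mat \<mu> = (\<chi> s p. if fst p = s then \<mu> s (snd p) else 0)"

definition V_fun :: "real ^ 'm ^ ('s::finite \<times> 'a::finite) \<Rightarrow> real ^ 'm \<Rightarrow> real ^ 's" where
  "V_fun \<Phi> \<theta> = (\<chi> s. Max (range (\<lambda>a. (\<Phi> *v \<theta>) $ (s, a))))"

definition T_op :: "real ^ 'm ^ ('s::finite \<times> 'a::finite) \<Rightarrow> real ^ ('s \<times> 'a)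
    \<Rightarrow> real ^ ('s \<times> 'a) \<Rightarrow> real ^ 's ^ ('s \<times> 'a) \<Rightarrow> real \<Rightarrow> real \<Rightarrow> real
    \<Rightarrow> real ^ 'm \<Rightarrow> real ^ 'm" where
  "T_op \<Phi> d R P \<gamma> \<alpha> \<eta> \<theta> =
     \<theta> + \<alpha> *\<^sub>R (transpose \<Phi> *v (diag_mat d *v (R + \<gamma> *\<^sub>R (P *v V_fun \<Phi> \<theta>) - \<Phi> *v \<theta>))
                  - \<eta> *\<^sub>R \<theta>)"

definition A_mat :: "real ^ 'm ^ ('s::finite \<times> 'a::finite) \<Rightarrow> real ^ ('s \<times> 'a)
    \<Rightarrow> real ^ 's ^ ('s \<times> 'a) \<Rightarrow> real \<Rightarrow> real \<Rightarrow> real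
    \<Rightarrow> ('s \<Rightarrow> 'a \<Rightarrow> real) \<Rightarrow> real ^ 'm ^ 'm" where
  "A_mat \<Phi> d P \<gamma> \<alpha> \<eta> \<mu> =
     mat 1 - \<alpha> *\<^sub>R (transpose \<Phi> ** diag_mat d ** \<Phi> + \<eta> *\<^sub>R mat 1)
       + (\<alpha> * \<gamma>) *\<^sub>R (transpose \<Phi> ** diag_mat d ** P ** Pi_mat \<mu> ** \<Phi>)"

end

theory Submission imports Defs begin

text \<open>For each state s, V(\<theta>)(s) - V(\<theta>')(s) = max_a \<phi>(s,a)\<bullet>\<theta> - max_a \<phi>(s,a)\<bullet>\<theta>' lies
  between the minimum and the maximum over a of \<phi>(s,a)\<bullet>(\<theta> - \<theta>'). It is therefore a convex
  combination of these two values, i.e. the expectation of \<phi>(s,a)\<bullet>(\<theta> - \<theta>') under a policy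
  that spreads its mass uniformly over the maximising and over the minimising actions. For
  that policy \<Pi>(\<mu>) \<Phi> (\<theta> - \<theta>') = V(\<theta>) - V(\<theta>'), and T(\<theta>) - T(\<theta>') is affine in exactly
  this vector, which yields A(\<mu>) (\<theta> - \<theta>'). The policy is built from finitely many maxima,
  minima, comparisons and quotients of linear functions of (\<theta>, \<theta>'), so it is Borel
  measurable.\<close>

definition uniform_on_level :: "('a::finite \<Rightarrow> real) \<Rightarrow> real \<Rightarrow> 'a \<Rightarrow> real" where
  "uniform_on_level h c a =
     (if h a = c then 1 else 0) / (\<Sum>b\<in>UNIV. if h b = c then 1 else 0)"

lemma uniform_on_level_nonneg: "0 \<le> uniform_on_level h c a"
  unfolding uniform_on_level_def by (simp add: sum_nonneg)

lemma uniform_on_level_normaliser_pos: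
  fixes h :: "'a::finite \<Rightarrow> real"
  assumes "c \<in> range h"
  shows "0 < (\<Sum>b\<in>UNIV. if h b = c then 1 else (0::real))"
proof -
  from assms obtain b0 where "h b0 = c" by auto
  then have "(if h b0 = c then 1 else 0) \<le> (\<Sum>b\<in>UNIV. if h b = c then 1 else (0::real))"
    by (intro member_le_sum) auto
  with \<open>h b0 = c\<close> show ?thesis by simp
qed

lemma sum_uniform_on_level:
  assumes "c \<in> range h"
  shows "(\<Sum>a\<in>UNIV. uniform_on_level h c a) = 1"
  using uniform_on_level_normaliser_pos[OF assms]
  by (simp add: uniform_on_level_def sum_divide_distrib[symmetric])

lemma sum_uniform_on_level_mult:
  assumes "c \<in> range h"
  shows "(\<Sum>a\<in>UNIV. uniform_on_level h c a * h a) = c"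
proof -
  have "(\<Sum>a\<in>UNIV. uniform_on_level h c a * h a) = (\<Sum>a\<in>UNIV. uniform_on_level h c a) * c"
    unfolding sum_distrib_right by (rule sum.cong) (auto simp: uniform_on_level_def)
  then show ?thesis by (simp add: sum_uniform_on_level[OF assms])
qed

lemma Max_range_diff_between:
  fixes f g :: "'a::finite \<Rightarrow> real"
  shows "Min (range (\<lambda>a. f a - g a)) \<le> Max (range f) - Max (range g)"
    and "Max (range f) - Max (range g) \<le> Max (range (\<lambda>a. f a - g a))"
proof -
  have "Max (range f) \<in> range f" "Max (range g) \<in> range g" by (auto intro: Max_in)
  then obtain af ag where af: "Max (range f) = f af" and ag: "Max (range g) = g ag" by blast
  have "Min (range (\<lambda>a. f a - g a)) \<le> f ag - g ag" "f ag \<le> Max (range f)"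
    by (auto intro: Min_le Max_ge)
  with ag show "Min (range (\<lambda>a. f a - g a)) \<le> Max (range f) - Max (range g)" by linarith
  have "f af - g af \<le> Max (range (\<lambda>a. f a - g a))" "g af \<le> Max (range g)"
    by (auto intro: Max_ge)
  with af show "Max (range f) - Max (range g) \<le> Max (range (\<lambda>a. f a - g a))" by linarith
qed

text \<open>If the maximum and minimum of f - g coincide, the weight is 0/0 = 0 and the second
  summand alone is the uniform distribution on all actions.\<close>
definition max_diff_policy :: "('a::finite \<Rightarrow> real) \<Rightarrow> ('a \<Rightarrow> real) \<Rightarrow> 'a \<Rightarrow> real" where
  "max_diff_policy f g a =
     (let h = (\<lambda>b. f b - g b); U = Max (range h); L = Min (range h);
          w = (Max (range f) - Max (range g) - L) / (U - L)
      in w * uniform_on_level h U a + (1 - w) * uniform_on_level h L a)"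

lemma max_diff_policy_weight_bounds:
  fixes f g :: "'a::finite \<Rightarrow> real"
  defines "L \<equiv> Min (range (\<lambda>b. f b - g b))" and "U \<equiv> Max (range (\<lambda>b. f b - g b))"
  defines "w \<equiv> (Max (range f) - Max (range g) - L) / (U - L)"
  shows "0 \<le> w" "w \<le> 1" "w * U + (1 - w) * L = Max (range f) - Max (range g)"
proof -
  define D where "D = Max (range f) - Max (range g)"
  have "L \<le> D" "D \<le> U"
    unfolding L_def U_def D_def by (fact Max_range_diff_between)+
  consider "U = L" | "L < U" using \<open>L \<le> D\<close> \<open>D \<le> U\<close> by linarith
  then have "0 \<le> w \<and> w \<le> 1 \<and> w * U + (1 - w) * L = D"
  proof cases
    case 1
    then show ?thesis using \<open>L \<le> D\<close> \<open>D \<le> U\<close> by (simp add: w_def flip: D_def)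
  next
    case 2
    then have "w * (U - L) = D - L" by (simp add: w_def flip: D_def)
    moreover have "0 \<le> w" "w \<le> 1"
      using 2 \<open>L \<le> D\<close> \<open>D \<le> U\<close> by (simp_all add: w_def divide_le_eq_1 flip: D_def)
    ultimately show ?thesis by (simp add: algebra_simps)
  qed
  then show "0 \<le> w" "w \<le> 1" "w * U + (1 - w) * L = Max (range f) - Max (range g)"
    unfolding D_def by auto
qed

lemma convex_uniform_on_levels:
  fixes h :: "'a::finite \<Rightarrow> real"
  assumes "U \<in> range h" "L \<in> range h" "0 \<le> w" "w \<le> 1"
  defines "\<mu> \<equiv> \<lambda>a. w * uniform_on_level h U a + (1 - w) * uniform_on_level h L a"
  shows "0 \<le> \<mu> a" "(\<Sum>a\<in>UNIV. \<mu> a) = 1" "(\<Sum>a\<in>UNIV. \<mu> a * h a) = w * U + (1 - w) * L"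
proof -
  show "0 \<le> \<mu> a"
    using assms(3,4) by (simp add: \<mu>_def uniform_on_level_nonneg)
  show "(\<Sum>a\<in>UNIV. \<mu> a) = 1"
    by (simp add: \<mu>_def sum.distrib sum_uniform_on_level assms(1,2) flip: sum_distrib_left)
  have "(\<Sum>a\<in>UNIV. \<mu> a * h a)
      = (\<Sum>a\<in>UNIV. w * (uniform_on_level h U a * h a) + (1 - w) * (uniform_on_level h L a * h a))"
    by (simp add: \<mu>_def algebra_simps)
  also have "\<dots> = w * (\<Sum>a\<in>UNIV. uniform_on_level h U a * h a)
      + (1 - w) * (\<Sum>a\<in>UNIV. uniform_on_level h L a * h a)"
    by (simp add: sum.distrib sum_distrib_left)
  finally show "(\<Sum>a\<in>UNIV. \<mu> a * h a) = w * U + (1 - w) * L"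
    by (simp add: sum_uniform_on_level_mult assms(1,2))
qed

lemma max_diff_policy_convex_uniform_on_levels:
  fixes f g :: "'a::finite \<Rightarrow> real"
  obtains w where "0 \<le> w" "w \<le> 1"
    and "w * Max (range (\<lambda>b. f b - g b)) + (1 - w) * Min (range (\<lambda>b. f b - g b))
        = Max (range f) - Max (range g)"
    and "max_diff_policy f g = (\<lambda>a. w * uniform_on_level (\<lambda>b. f b - g b) (Max (range (\<lambda>b. f b - g b))) a
        + (1 - w) * uniform_on_level (\<lambda>b. f b - g b) (Min (range (\<lambda>b. f b - g b))) a)"
  by (rule that[OF max_diff_policy_weight_bounds]) (simp add: max_diff_policy_def Let_def fun_eq_iff)

lemma
  fixes f g :: "'a::finite \<Rightarrow> real"
  shows max_diff_policy_nonneg: "0 \<le> max_diff_policy f g a"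
    and sum_max_diff_policy: "(\<Sum>a\<in>UNIV. max_diff_policy f g a) = 1"
    and sum_max_diff_policy_mult_diff:
      "(\<Sum>a\<in>UNIV. max_diff_policy f g a * (f a - g a)) = Max (range f) - Max (range g)"
proof -
  obtain w where w: "0 \<le> w" "w \<le> 1"
    and mean: "w * Max (range (\<lambda>b. f b - g b)) + (1 - w) * Min (range (\<lambda>b. f b - g b))
        = Max (range f) - Max (range g)"
    and eq: "max_diff_policy f g = (\<lambda>a. w * uniform_on_level (\<lambda>b. f b - g b) (Max (range (\<lambda>b. f b - g b))) a
        + (1 - w) * uniform_on_level (\<lambda>b. f b - g b) (Min (range (\<lambda>b. f b - g b))) a)"
    by (rule max_diff_policy_convex_uniform_on_levels)
  have levels: "Max (range (\<lambda>b. f b - g b)) \<in> range (\<lambda>b. f b - g b)"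
      "Min (range (\<lambda>b. f b - g b)) \<in> range (\<lambda>b. f b - g b)"
    by (auto intro: Max_in Min_in)
  note convex = convex_uniform_on_levels[OF levels w]
  show "0 \<le> max_diff_policy f g a" "(\<Sum>a\<in>UNIV. max_diff_policy f g a) = 1"
    using convex(1,2) by (simp_all add: eq)
  show "(\<Sum>a\<in>UNIV. max_diff_policy f g a * (f a - g a)) = Max (range f) - Max (range g)"
    using convex(3) mean by (simp add: eq)
qed

lemma borel_measurable_max_diff_policy:
  fixes F G :: "'a::finite \<Rightarrow> 'x \<Rightarrow> real"
  assumes [measurable]: "\<And>a. F a \<in> borel_measurable N" "\<And>a. G a \<in> borel_measurable N"
  shows "(\<lambda>x. max_diff_policy (\<lambda>a. F a x) (\<lambda>a. G a x) b) \<in> borel_measurable N"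
  unfolding max_diff_policy_def uniform_on_level_def Let_def by measurable

definition greedy_diff_policy ::
    "real ^ 'm ^ ('s::finite \<times> 'a::finite) \<Rightarrow> real ^ 'm \<Rightarrow> real ^ 'm \<Rightarrow> 's \<Rightarrow> 'a \<Rightarrow> real" where
  "greedy_diff_policy \<Phi> \<theta> \<theta>' s = max_diff_policy (\<lambda>a. (\<Phi> *v \<theta>) $ (s, a)) (\<lambda>a. (\<Phi> *v \<theta>') $ (s, a))"

lemma is_stoch_policy_greedy_diff_policy: "is_stoch_policy (greedy_diff_policy \<Phi> \<theta> \<theta>')"
  by (simp add: is_stoch_policy_def greedy_diff_policy_def max_diff_policy_nonneg
      sum_max_diff_policy)

lemma Pi_mat_mult_vec_nth: "(Pi_mat \<mu> *v v) $ s = (\<Sum>a\<in>UNIV. \<mu> s a * v $ (s, a))"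
proof -
  have "(Pi_mat \<mu> *v v) $ s = (\<Sum>(s', a)\<in>UNIV \<times> UNIV. (if s' = s then \<mu> s a else 0) * v $ (s', a))"
    by (simp add: Pi_mat_def matrix_vector_mult_def case_prod_beta)
  also have "\<dots> = (\<Sum>s'\<in>UNIV. \<Sum>a\<in>UNIV. (if s' = s then \<mu> s a else 0) * v $ (s', a))"
    by (rule sum.cartesian_product[symmetric])
  also have "\<dots> = (\<Sum>a\<in>UNIV. \<mu> s a * v $ (s, a))"
  proof -
    have "(\<Sum>a\<in>UNIV. (if s' = s then \<mu> s a else 0) * v $ (s', a))
        = (if s' = s then \<Sum>a\<in>UNIV. \<mu> s a * v $ (s, a) else 0)" for s'
      by auto
    then show ?thesis by simp
  qed
  finally show ?thesis .
qed

lemma Pi_mat_greedy_diff_policy: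
  "Pi_mat (greedy_diff_policy \<Phi> \<theta> \<theta>') *v (\<Phi> *v (\<theta> - \<theta>')) = V_fun \<Phi> \<theta> - V_fun \<Phi> \<theta>'"
unfolding vec_eq_iff proof
  fix s
  have "(Pi_mat (greedy_diff_policy \<Phi> \<theta> \<theta>') *v (\<Phi> *v (\<theta> - \<theta>'))) $ s
      = (\<Sum>a\<in>UNIV. greedy_diff_policy \<Phi> \<theta> \<theta>' s a * ((\<Phi> *v \<theta>) $ (s, a) - (\<Phi> *v \<theta>') $ (s, a)))"
    by (simp add: Pi_mat_mult_vec_nth matrix_vector_mult_diff_distrib right_diff_distrib sum_subtractf)
  also have "\<dots> = (V_fun \<Phi> \<theta> - V_fun \<Phi> \<theta>') $ s"
    unfolding greedy_diff_policy_def V_fun_def by (simp add: sum_max_diff_policy_mult_diff)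
  finally show "(Pi_mat (greedy_diff_policy \<Phi> \<theta> \<theta>') *v (\<Phi> *v (\<theta> - \<theta>'))) $ s
      = (V_fun \<Phi> \<theta> - V_fun \<Phi> \<theta>') $ s" .
qed

lemma borel_measurable_greedy_diff_policy:
  fixes \<Phi> :: "real ^ 'm::finite ^ ('s::finite \<times> 'a::finite)"
  shows   "(\<lambda>q. greedy_diff_policy \<Phi> (fst q) (snd q) s a) \<in> borel_measurable borel"
proof -
  have "continuous_on UNIV (\<lambda>q :: (real ^ 'm) \<times> (real ^ 'm). (\<Phi> *v fst q) $ p)"
       "continuous_on UNIV (\<lambda>q :: (real ^ 'm) \<times> (real ^ 'm). (\<Phi> *v snd q) $ p)" for p
    by (intro linear_continuous_on bounded_linear_compose[OF bounded_linear_vec_nth]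
        bounded_linear_compose[OF matrix_vector_mul_bounded_linear]
        bounded_linear_fst bounded_linear_snd)+
  then show ?thesis
    unfolding greedy_diff_policy_def
    by (intro borel_measurable_max_diff_policy borel_measurable_continuous_onI)
qed

lemma T_op_diff:
  assumes "Pi_mat \<mu> *v (\<Phi> *v (\<theta> - \<theta>')) = V_fun \<Phi> \<theta> - V_fun \<Phi> \<theta>'"
  shows "T_op \<Phi> d R P \<gamma> \<alpha> \<eta> \<theta> - T_op \<Phi> d R P \<gamma> \<alpha> \<eta> \<theta>'
          = A_mat \<Phi> d P \<gamma> \<alpha> \<eta> \<mu> *v (\<theta> - \<theta>')"
proof -
  define z where "z = \<theta> - \<theta>'"
  have "A_mat \<Phi> d P \<gamma> \<alpha> \<eta> \<mu> *v z
      = z - \<alpha> *\<^sub>R (transpose \<Phi> *v (diag_mat d *v (\<Phi> *v z)) + \<eta> *\<^sub>R z)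
        + (\<alpha> * \<gamma>) *\<^sub>R (transpose \<Phi> *v (diag_mat d *v (P *v (Pi_mat \<mu> *v (\<Phi> *v z)))))"
    unfolding A_mat_def
    by (simp only: matrix_vector_mult_add_rdistrib matrix_vector_mult_diff_rdistrib
        scaleR_matrix_vector_assoc[symmetric] matrix_vector_mul_assoc[symmetric]
        matrix_vector_mul_lid)
  moreover have "T_op \<Phi> d R P \<gamma> \<alpha> \<eta> \<theta> - T_op \<Phi> d R P \<gamma> \<alpha> \<eta> \<theta>'
      = z - \<alpha> *\<^sub>R (transpose \<Phi> *v (diag_mat d *v (\<Phi> *v z)) + \<eta> *\<^sub>R z)
        + (\<alpha> * \<gamma>) *\<^sub>R (transpose \<Phi> *v (diag_mat d *v (P *v (V_fun \<Phi> \<theta> - V_fun \<Phi> \<theta>'))))"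
    unfolding T_op_def z_def
    by (simp only: scaleR_scaleR algebra_simps)
  ultimately show ?thesis using assms unfolding z_def by simp
qed

lemma T_op_fixed_point:
  assumes "transpose \<Phi> *v (diag_mat d *v (R + \<gamma> *\<^sub>R (P *v V_fun \<Phi> \<theta>) - \<Phi> *v \<theta>)) - \<eta> *\<^sub>R \<theta> = 0"
  shows "T_op \<Phi> d R P \<gamma> \<alpha> \<eta> \<theta> = \<theta>"
  using assms unfolding T_op_def by simp

theorem proposition4:
  fixes P :: "real ^ 's::finite ^ ('s \<times> 'a::finite)"
    and R :: "real ^ ('s \<times> 'a)"
    and \<Phi> :: "real ^ 'm::finite ^ ('s \<times> 'a)"
    and d :: "real ^ ('s \<times> 'a)"
    and \<gamma> \<alpha> \<eta> :: real
  assumes P_nonneg: "\<forall>p s'. 0 \<le> P $ p $ s'"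
    and P_rows: "\<forall>p. (\<Sum>s'\<in>UNIV. P $ p $ s') = 1"
    and gamma: "0 < \<gamma>" "\<gamma> < 1"
    and rank_Phi: "rank \<Phi> = CARD('m)"
    and d_pos: "\<forall>p. 0 < d $ p"
    and alpha: "0 < \<alpha>" "\<alpha> < 1"
    and eta: "0 \<le> \<eta>"
  shows "\<exists>M :: real ^ 'm \<Rightarrow> real ^ 'm \<Rightarrow> ('s \<Rightarrow> 'a \<Rightarrow> real).
     (\<forall>\<theta> \<theta>'. is_stoch_policy (M \<theta> \<theta>') \<and>
        T_op \<Phi> d R P \<gamma> \<alpha> \<eta> \<theta> - T_op \<Phi> d R P \<gamma> \<alpha> \<eta> \<theta>'
          = A_mat \<Phi> d P \<gamma> \<alpha> \<eta> (M \<theta> \<theta>') *v (\<theta> - \<theta>'))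
   \<and> (\<forall>s a. (\<lambda>q. M (fst q) (snd q) s a) \<in> borel_measurable borel)
   \<and> (\<forall>\<theta>star \<theta>seq :: nat \<Rightarrow> real ^ 'm.
        transpose \<Phi> *v (diag_mat d *v (R + \<gamma> *\<^sub>R (P *v V_fun \<Phi> \<theta>star) - \<Phi> *v \<theta>star))
          - \<eta> *\<^sub>R \<theta>star = 0
        \<and> (\<forall>k. \<theta>seq (Suc k) = T_op \<Phi> d R P \<gamma> \<alpha> \<eta> (\<theta>seq k))
        \<longrightarrow> (\<forall>k. \<theta>seq (Suc k) - \<theta>star
               = A_mat \<Phi> d P \<gamma> \<alpha> \<eta> (M (\<theta>seq k) \<theta>star) *v (\<theta>seq k - \<theta>star)))"
  \<comment> \<open>The identity is purely algebraic.\<close>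
proof (intro exI[of _ "greedy_diff_policy \<Phi>"] conjI allI impI)
  fix \<theta> \<theta>'
  show "is_stoch_policy (greedy_diff_policy \<Phi> \<theta> \<theta>')"
    by (rule is_stoch_policy_greedy_diff_policy)
  show "T_op \<Phi> d R P \<gamma> \<alpha> \<eta> \<theta> - T_op \<Phi> d R P \<gamma> \<alpha> \<eta> \<theta>'
      = A_mat \<Phi> d P \<gamma> \<alpha> \<eta> (greedy_diff_policy \<Phi> \<theta> \<theta>') *v (\<theta> - \<theta>')"
    by (rule T_op_diff[OF Pi_mat_greedy_diff_policy])
next
  fix s a
  show "(\<lambda>q. greedy_diff_policy \<Phi> (fst q) (snd q) s a) \<in> borel_measurable borel"
    by (rule borel_measurable_greedy_diff_policy)
next
  fix \<theta>star and \<theta>seq :: "nat \<Rightarrow> real ^ 'm" and k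
  assume "transpose \<Phi> *v (diag_mat d *v (R + \<gamma> *\<^sub>R (P *v V_fun \<Phi> \<theta>star) - \<Phi> *v \<theta>star))
      - \<eta> *\<^sub>R \<theta>star = 0 \<and> (\<forall>k. \<theta>seq (Suc k) = T_op \<Phi> d R P \<gamma> \<alpha> \<eta> (\<theta>seq k))"
  then have "\<theta>seq (Suc k) - \<theta>star = T_op \<Phi> d R P \<gamma> \<alpha> \<eta> (\<theta>seq k) - T_op \<Phi> d R P \<gamma> \<alpha> \<eta> \<theta>star"
    by (simp add: T_op_fixed_point)
  also have "\<dots> = A_mat \<Phi> d P \<gamma> \<alpha> \<eta> (greedy_diff_policy \<Phi> (\<theta>seq k) \<theta>star) *v (\<theta>seq k - \<theta>star)"
    by (rule T_op_diff[OF Pi_mat_greedy_diff_policy])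
  finally show "\<theta>seq (Suc k) - \<theta>star
      = A_mat \<Phi> d P \<gamma> \<alpha> \<eta> (greedy_diff_policy \<Phi> (\<theta>seq k) \<theta>star) *v (\<theta>seq k - \<theta>star)" .
qed

end
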